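(* Let $n\ge 2$ be an integer and $m=\min\{k\in\mathbb{N}: n\le\tfrac12(k^3-k^2)\}$. Then $\chi_{L_2}(P_n)=m$. Moreover, for the path $P_n=v_1v_2\cdots v_n$ there exists a neighbor locating coloring $f_n:V(P_n)\to[m]$ (onto) such that $f_n(v_{n-1})=2$ and $f_n(v_n)=1$; furthermore, if $n\ge 9$ then also $f_n(v_{n-2})=m$, and if $n\ge 9$ and $n\ne\tfrac12(m^3-m^2)-1$ then also $f_n(v_1)=2$ and $f_n(v_2)=1$.
   Context: All graphs are finite and simple; $P_n=v_1v_2\cdots v_n$ is the path with edges $v_iv_{i+1}$, $1\le i<n$. A proper $k$-coloring of $G$ is a map $f$ from $V(G)$ onto $[k]=\{1,\dots,k\}$ with adjacent vertices receiving different colors; $f(S)=\{f(u):u\in S\}$ and $N_G(u)$ is the neighborhood of $u$. A proper $k$-coloring $f$ is a neighbor locating coloring if for any two distinct vertices $u,v$ with $f(u)=f(v)$ we have $f(N_G(u))\ne f(N_G(v))$; $\chi_{L_2}(G)$ is the minimum number of colors in a neighbor locating coloring of $G$. *)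

theory Defs
  imports Main
begin

text \<open>A finite simple graph is given by a vertex set V and an adjacency
relation E (assumed symmetric and irreflexive on V where relevant).\<close>

definition nbhd :: "('a \<Rightarrow> 'a \<Rightarrow> bool) \<Rightarrow> 'a set \<Rightarrow> 'a \<Rightarrow> 'a set" where
  "nbhd E V u = {v \<in> V. E u v}"

definition proper_coloring :: "'a set \<Rightarrow> ('a \<Rightarrow> 'a \<Rightarrow> bool) \<Rightarrow> nat \<Rightarrow> ('a \<Rightarrow> nat) \<Rightarrow> bool" where
  "proper_coloring V E k f \<longleftrightarrow> f ` V = {1..k} \<and> (\<forall>u\<in>V. \<forall>v\<in>V. E u v \<longrightarrow> f u \<noteq> f v)"

definition neighbor_locating_coloring ::
  "'a set \<Rightarrow> ('a \<Rightarrow> 'a \<Rightarrow> bool) \<Rightarrow> nat \<Rightarrow> ('a \<Rightarrow> nat) \<Rightarrow> bool" where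
  "neighbor_locating_coloring V E k f \<longleftrightarrow> proper_coloring V E k f \<and>
     (\<forall>u\<in>V. \<forall>v\<in>V. u \<noteq> v \<and> f u = f v \<longrightarrow> f ` nbhd E V u \<noteq> f ` nbhd E V v)"

definition chi_L2 :: "'a set \<Rightarrow> ('a \<Rightarrow> 'a \<Rightarrow> bool) \<Rightarrow> nat" where
  "chi_L2 V E = (LEAST k. \<exists>f. neighbor_locating_coloring V E k f)"

text \<open>The path P_n = v_1 v_2 ... v_n, with v_i represented by the natural number i.\<close>
definition path_V :: "nat \<Rightarrow> nat set" where
  "path_V n = {1..n}"

definition path_E :: "nat \<Rightarrow> nat \<Rightarrow> bool" where
  "path_E i j \<longleftrightarrow> i + 1 = j \<or> j + 1 = i"

end

theory Submission
  imports Defs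
begin

text \<open>
Lower bound: in a neighbour locating colouring of \<open>P\<^sub>n\<close> with \<open>k\<close> colours the trace
\<open>v \<mapsto> (f v, f(N(v)))\<close> is injective, and \<open>f(N(v))\<close> is a set of one or two colours different from
\<open>f v\<close>; there are only \<open>k ((k - 1) + (k - 1 choose 2)) = (k\<^sup>3 - k\<^sup>2)/2\<close> such pairs.

Upper bound: a colouring of the path is a word \<open>G\<close> over the colours. Given a good word for
\<open>M\<close> colours beginning with \<open>1 2\<close>, prefix it by \<open>1 2\<close> followed by a block in which the new
colour \<open>m = M + 1\<close> alternates with short segments of old colours. Every new trace contains \<open>m\<close>,
so it cannot clash with an old one, and distinctness within the block is arranged by visiting the
pairs of old colours systematically. The possible block lengths, combined with starting words of
length \<open>N, N - 1, N - 2, N - 4\<close> for \<open>N = (M\<^sup>3 - M\<^sup>2)/2\<close>, reach every length up to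
\<open>((M + 1)\<^sup>3 - (M + 1)\<^sup>2)/2\<close>, and the resulting words again begin with \<open>1 2 m\<close> and
(with one exception) end with \<open>1 2\<close>.
\<close>

section \<open>Counting bound\<close>

definition locating_coloring :: "'a set \<Rightarrow> ('a \<Rightarrow> 'a \<Rightarrow> bool) \<Rightarrow> ('a \<Rightarrow> nat) \<Rightarrow> bool" where
  "locating_coloring V E f \<longleftrightarrow> (\<forall>u\<in>V. \<forall>v\<in>V. E u v \<longrightarrow> f u \<noteq> f v) \<and>
     (\<forall>u\<in>V. \<forall>v\<in>V. u \<noteq> v \<and> f u = f v \<longrightarrow> f ` nbhd E V u \<noteq> f ` nbhd E V v)"

lemma neighbor_locating_coloring_iff:
  "neighbor_locating_coloring V E k f \<longleftrightarrow> f ` V = {1..k} \<and> locating_coloring V E f"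
  unfolding neighbor_locating_coloring_def proper_coloring_def locating_coloring_def by blast

definition trace_space :: "nat set \<Rightarrow> (nat \<times> nat set) set" where
  "trace_space C = (SIGMA c:C. {S. S \<subseteq> C - {c} \<and> card S \<in> {1, 2}})"

lemma cube_minus_square: "(k::nat) ^ 3 - k ^ 2 = k * k * (k - 1)"
  by (simp add: power2_eq_square power3_eq_cube diff_mult_distrib2 algebra_simps)

lemma card_trace_space:
  assumes "finite C"
  shows "2 * card (trace_space C) = card C ^ 3 - card C ^ 2"
proof -
  let ?k = "card C"
  have fiber: "card {S. S \<subseteq> C - {c} \<and> card S \<in> {1, 2}} = ?k choose 2" if "c \<in> C" for c
  proof -
    have fin: "finite (C - {c})" using assms by simp
    have "{S. S \<subseteq> C - {c} \<and> card S \<in> {1, 2}} =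
        {S. S \<subseteq> C - {c} \<and> card S = 1} \<union> {S. S \<subseteq> C - {c} \<and> card S = 2}" by auto
    also have "card \<dots> = card {S. S \<subseteq> C - {c} \<and> card S = 1} + card {S. S \<subseteq> C - {c} \<and> card S = 2}"
      by (rule card_Un_disjoint) (use fin in auto)
    also have "\<dots> = (?k - 1 choose 1) + (?k - 1 choose 2)"
      using n_subsets[OF fin, of 1] n_subsets[OF fin, of 2] that assms by simp
    also have "\<dots> = ?k choose 2" using that assms by (cases ?k) (auto simp: numeral_2_eq_2)
    finally show ?thesis .
  qed
  have "card (trace_space C) = ?k * (?k choose 2)"
    unfolding trace_space_def using assms fiber by (simp add: card_SigmaI)
  moreover have "2 * (?k choose 2) = ?k * (?k - 1)"
    unfolding choose_two by (cases "even ?k") auto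
  ultimately show ?thesis by (simp add: cube_minus_square)
qed

lemma locating_coloring_card_le:
  assumes "finite C" "f ` V \<subseteq> C" "locating_coloring V E f"
    and deg: "\<And>v. v \<in> V \<Longrightarrow> nbhd E V v \<noteq> {} \<and> finite (nbhd E V v) \<and> card (nbhd E V v) \<le> 2"
  shows "2 * card V \<le> card C ^ 3 - card C ^ 2"
proof -
  define \<phi> where "\<phi> v = (f v, f ` nbhd E V v)" for v
  have "inj_on \<phi> V" using assms(3) unfolding inj_on_def \<phi>_def locating_coloring_def by auto
  moreover have "\<phi> ` V \<subseteq> trace_space C"
  proof (rule image_subsetI)
    fix v assume v: "v \<in> V"
    let ?S = "f ` nbhd E V v"
    have "?S \<subseteq> C - {f v}"
      using assms(2,3) v unfolding locating_coloring_def nbhd_def by (blast dest: sym)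
    moreover have "card ?S \<le> 2" using deg[OF v] card_image_le le_trans by blast
    moreover have "card ?S \<noteq> 0" using deg[OF v] by simp
    ultimately show "\<phi> v \<in> trace_space C" using v assms(2) unfolding \<phi>_def trace_space_def by auto
  qed
  moreover have "finite (trace_space C)" using assms(1) unfolding trace_space_def by auto
  ultimately have "card V \<le> card (trace_space C)" by (rule card_inj_on_le)
  then show ?thesis using card_trace_space[OF assms(1)] by simp
qed

lemma nbhd_path:
  assumes "i \<in> path_V n"
  shows "nbhd path_E (path_V n) i = (if i < n then {i + 1} else {}) \<union> (if 2 \<le> i then {i - 1} else {})"
  using assms unfolding nbhd_def path_E_def path_V_def by auto

lemma path_degree:
  assumes "2 \<le> n" "v \<in> path_V n"
  shows "nbhd path_E (path_V n) v \<noteq> {} \<and> finite (nbhd path_E (path_V n) v) \<and>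
    card (nbhd path_E (path_V n) v) \<le> 2"
proof -
  have "v < n \<or> 2 \<le> v" using assms by (auto simp: path_V_def)
  moreover have "card ({v + 1} \<union> {v - 1}) \<le> 2" by (rule order_trans[OF card_Un_le]) simp
  ultimately show ?thesis
    unfolding nbhd_path[OF assms(2)] by (auto split: if_splits)
qed

lemma path_locating_coloring_card_le:
  assumes "2 \<le> n" "finite C" "f ` path_V n \<subseteq> C" "locating_coloring (path_V n) path_E f"
  shows "2 * n \<le> card C ^ 3 - card C ^ 2"
  using locating_coloring_card_le[OF assms(2-4) path_degree[OF assms(1)]] by (simp add: path_V_def)

definition path_capacity :: "nat \<Rightarrow> nat" where
  "path_capacity k = (k ^ 3 - k ^ 2) div 2"

lemma two_path_capacity: "2 * path_capacity k = k ^ 3 - k ^ 2"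
proof -
  have "even (k * k * (k - 1))" by (cases "even k") auto
  then show ?thesis unfolding path_capacity_def cube_minus_square by simp
qed

lemma path_capacity_le_iff: "n \<le> path_capacity k \<longleftrightarrow> 2 * n \<le> k ^ 3 - k ^ 2"
  using two_path_capacity[of k] by linarith

lemma path_capacity_small: "path_capacity 0 = 0" "path_capacity 1 = 0" "path_capacity 2 = 2"
  "path_capacity 3 = 9"
  by (simp_all add: path_capacity_def)

lemma path_capacity_ge_self: "2 \<le> n \<Longrightarrow> n \<le> path_capacity n"
proof -
  assume "2 \<le> n"
  then have "2 * 1 \<le> n * (n - 1)" by (intro mult_le_mono) auto
  then have "n * 2 \<le> n * (n * (n - 1))" by simp
  also have "\<dots> = 2 * path_capacity n"
    using two_path_capacity[of n] cube_minus_square[of n] by (simp add: mult.assoc)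
  finally show ?thesis by simp
qed

lemma path_nl_coloring_bound:
  "2 \<le> n \<Longrightarrow> neighbor_locating_coloring (path_V n) path_E k f \<Longrightarrow> n \<le> path_capacity k"
  using path_locating_coloring_card_le[of n "{1..k}" f]
  by (simp add: neighbor_locating_coloring_iff path_capacity_le_iff)

section \<open>Words and colourings of the path\<close>

text \<open>The traces of the letters of a word, given the letters \<open>p\<close> and \<open>q\<close> just outside it
  (\<open>None\<close> at an end of the path).\<close>
fun traces :: "'a option \<Rightarrow> 'a list \<Rightarrow> 'a option \<Rightarrow> ('a \<times> 'a set) list" where
  "traces p [] q = []"
| "traces p [x] q = [(x, set_option p \<union> set_option q)]"
| "traces p (x # y # zs) q = (x, set_option p \<union> {y}) # traces (Some x) (y # zs) q"

lemma length_traces [simp]: "length (traces p xs q) = length xs"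
  by (induction p xs q rule: traces.induct) auto

lemma nth_traces:
  "i < length xs \<Longrightarrow> traces p xs q ! i =
     (xs ! i, (if i = 0 then set_option p else {xs ! (i - 1)}) \<union>
              (if i = length xs - 1 then set_option q else {xs ! (i + 1)}))"
proof (induction p xs q arbitrary: i rule: traces.induct)
  case (3 p x y zs q)
  show ?case
  proof (cases i)
    case (Suc k)
    with "3.prems" have "k < length (y # zs)" by simp
    from "3.IH"[OF this] Suc show ?thesis by (cases k) auto
  qed simp
qed auto

lemma traces_Cons:
  "xs \<noteq> [] \<Longrightarrow> traces p (x # xs) q = (x, set_option p \<union> {hd xs}) # traces (Some x) xs q"
  by (cases xs) auto

lemma traces_memD:
  "t \<in> set (traces p xs q) \<Longrightarrow> fst t \<in> set xs \<and> snd t \<subseteq> set xs \<union> set_option p \<union> set_option q"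
  by (induction p xs q rule: traces.induct) auto

lemma traces_append:
  "xs \<noteq> [] \<Longrightarrow> ys \<noteq> [] \<Longrightarrow>
   traces p (xs @ ys) q = traces p xs (Some (hd ys)) @ traces (Some (last xs)) ys q"
proof (induction p xs "Some (hd ys)" rule: traces.induct)
  case (2 p x)
  then show ?case by (cases ys) auto
qed auto

definition nl_word :: "nat \<Rightarrow> nat list \<Rightarrow> bool" where
  "nl_word m G \<longleftrightarrow> successively (\<noteq>) G \<and> distinct (traces None G None) \<and> set G \<subseteq> {1..m}"

text \<open>The word lists the colours of \<open>v\<^sub>n, \<dots>, v\<^sub>1\<close>, in this order.\<close>
definition path_coloring :: "nat list \<Rightarrow> nat \<Rightarrow> nat" where
  "path_coloring G i = G ! (length G - i)"

lemma path_coloring_image: "path_coloring G ` path_V (length G) = set G"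
proof
  show "path_coloring G ` path_V (length G) \<subseteq> set G"
    by (auto simp: path_coloring_def path_V_def)
  show "set G \<subseteq> path_coloring G ` path_V (length G)"
  proof
    fix c assume "c \<in> set G"
    then obtain p where "p < length G" "G ! p = c" by (auto simp: in_set_conv_nth)
    then have "path_coloring G (length G - p) = c" "length G - p \<in> path_V (length G)"
      by (auto simp: path_coloring_def path_V_def)
    then show "c \<in> path_coloring G ` path_V (length G)" by force
  qed
qed

lemma traces_path_coloring:
  assumes "i \<in> path_V (length G)"
  shows "traces None G None ! (length G - i) =
    (path_coloring G i, path_coloring G ` nbhd path_E (path_V (length G)) i)"
proof -
  let ?n = "length G" and ?f = "path_coloring G"
  have i: "1 \<le> i" "i \<le> ?n" using assms by (auto simp: path_V_def)
  have right: "?f (i + 1) = G ! (?n - i - 1)" by (simp add: path_coloring_def)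
  have left: "2 \<le> i \<Longrightarrow> ?f (i - 1) = G ! (?n - i + 1)"
    using i by (simp add: path_coloring_def Suc_diff_le)
  have "traces None G None ! (?n - i) = (G ! (?n - i),
      (if ?n - i = 0 then {} else {G ! (?n - i - 1)}) \<union> (if i = 1 then {} else {G ! (?n - i + 1)}))"
    using nth_traces[of "?n - i" G None None] i by auto
  then show ?thesis
    unfolding nbhd_path[OF assms] using i right left by (cases "i = 1") (auto simp: path_coloring_def)
qed

lemma path_coloring_proper:
  assumes "successively (\<noteq>) G" "u \<in> path_V (length G)" "v \<in> path_V (length G)" "path_E u v"
  shows "path_coloring G u \<noteq> path_coloring G v"
proof -
  let ?n = "length G"
  have adj: "G ! p \<noteq> G ! Suc p" if "Suc p < ?n" for p
    using assms(1) that by (simp add: successively_conv_nth)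
  from assms(4) consider "v = u + 1" | "u = v + 1" by (auto simp: path_E_def)
  then show ?thesis
  proof cases
    case 1
    with assms(2,3) have "?n - u = Suc (?n - v)" "Suc (?n - v) < ?n" by (auto simp: path_V_def)
    with adj[of "?n - v"] show ?thesis by (simp add: path_coloring_def)
  next
    case 2
    with assms(2,3) have "?n - v = Suc (?n - u)" "Suc (?n - u) < ?n" by (auto simp: path_V_def)
    with adj[of "?n - u"] show ?thesis by (simp add: path_coloring_def)
  qed
qed

lemma path_coloring_locating:
  assumes "distinct (traces None G None)" "u \<in> path_V (length G)" "v \<in> path_V (length G)" "u \<noteq> v"
    and "path_coloring G u = path_coloring G v"
  shows "path_coloring G ` nbhd path_E (path_V (length G)) u \<noteq>
    path_coloring G ` nbhd path_E (path_V (length G)) v"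
proof -
  have "length G - u \<noteq> length G - v" "length G - u < length G" "length G - v < length G"
    using assms(2-4) by (auto simp: path_V_def)
  then show ?thesis
    using assms(1,5) traces_path_coloring[OF assms(2)] traces_path_coloring[OF assms(3)]
    by (metis length_traces nth_eq_iff_index_eq)
qed

lemma nl_word_locating_coloring:
  assumes "nl_word m G"
  shows "locating_coloring (path_V (length G)) path_E (path_coloring G)"
proof -
  have "successively (\<noteq>) G" "distinct (traces None G None)" using assms by (simp_all add: nl_word_def)
  then show ?thesis
    unfolding locating_coloring_def using path_coloring_proper path_coloring_locating by auto
qed

section \<open>Hub blocks\<close>

definition spoke :: "nat \<Rightarrow> nat \<Rightarrow> nat list" where
  "spoke v w = (if v = w then [v] else [v, w])"

text \<open>A triple \<open>(u, v, w)\<close> describes one excursion from the hub colour \<open>m\<close>: the hub occurrence is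
  entered from colour \<open>u\<close> and left towards the spoke \<open>v \<dots> w\<close>, after which the word returns to \<open>m\<close>.\<close>
definition hub_word :: "nat \<Rightarrow> (nat \<times> nat \<times> nat) list \<Rightarrow> nat list" where
  "hub_word m ds = concat (map (\<lambda>(u, v, w). m # spoke v w) ds) @ [m]"

fun linked :: "nat \<Rightarrow> (nat \<times> nat \<times> nat) list \<Rightarrow> bool" where
  "linked e [] = True"
| "linked e ((u, v, w) # ds) = (u = e \<and> linked w ds)"

fun last_exit :: "nat \<Rightarrow> (nat \<times> nat \<times> nat) list \<Rightarrow> nat" where
  "last_exit e [] = e"
| "last_exit e ((u, v, w) # ds) = last_exit w ds"

definition hub_pair :: "nat \<times> nat \<times> nat \<Rightarrow> nat set" where
  "hub_pair = (\<lambda>(u, v, w). {u, v})"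

definition spoke_pair :: "nat \<times> nat \<times> nat \<Rightarrow> nat set" where
  "spoke_pair = (\<lambda>(u, v, w). {v, w})"

definition spoke_traces :: "nat \<Rightarrow> nat set \<Rightarrow> (nat \<times> nat set) set" where
  "spoke_traces m S = (\<lambda>x. (x, insert m (S - {x}))) ` S"

fun hub_traces :: "nat \<Rightarrow> nat \<Rightarrow> nat \<Rightarrow> (nat \<times> nat \<times> nat) list \<Rightarrow> (nat \<times> nat set) list" where
  "hub_traces m e q [] = [(m, {e, q})]"
| "hub_traces m e q ((u, v, w) # ds) =
     (m, {u, v}) # traces (Some m) (spoke v w) (Some m) @ hub_traces m w q ds"

lemma hub_word_Cons: "hub_word m ((u, v, w) # ds) = [m] @ spoke v w @ hub_word m ds"
  by (simp add: hub_word_def)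

lemma hub_word_not_Nil [simp]: "hub_word m ds \<noteq> []"
  by (simp add: hub_word_def)

lemma hd_hub_word [simp]: "hd (hub_word m ds) = m"
  by (cases ds) (auto simp: hub_word_def)

lemma last_hub_word [simp]: "last (hub_word m ds) = m"
  by (simp add: hub_word_def)

lemma traces_hub_word:
  "linked e ds \<Longrightarrow> traces (Some e) (hub_word m ds) (Some q) = hub_traces m e q ds"
proof (induction ds arbitrary: e)
  case Nil
  then show ?case by (simp add: hub_word_def insert_commute)
next
  case (Cons d ds)
  obtain u v w where d: "d = (u, v, w)" by (cases d)
  have "spoke v w \<noteq> []" "hd (spoke v w) = v" "last (spoke v w) = w" by (auto simp: spoke_def)
  with Cons show ?case
    unfolding d hub_word_Cons by (simp add: traces_Cons traces_append insert_commute)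
qed

lemma set_traces_spoke: "set (traces (Some m) (spoke v w) (Some m)) = spoke_traces m {v, w}"
  by (auto simp: spoke_def spoke_traces_def insert_commute)

lemma distinct_traces_spoke: "distinct (traces (Some m) (spoke v w) (Some m))"
  by (auto simp: spoke_def)

lemma set_hub_traces:
  "set (hub_traces m e q ds) = (\<lambda>T. (m, T)) ` set (map hub_pair ds @ [{last_exit e ds, q}]) \<union>
     \<Union> (spoke_traces m ` set (map spoke_pair ds))"
  by (induction m e q ds rule: hub_traces.induct)
    (auto simp: set_traces_spoke hub_pair_def spoke_pair_def)

lemma spoke_traces_fstD: "p \<in> spoke_traces m S \<Longrightarrow> fst p \<in> S"
  by (auto simp: spoke_traces_def)

lemma spoke_traces_disjoint:
  assumes "m \<notin> S" "m \<notin> S'" "S \<noteq> S'"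
  shows "spoke_traces m S \<inter> spoke_traces m S' = {}"
proof (rule equals0I)
  fix p assume "p \<in> spoke_traces m S \<inter> spoke_traces m S'"
  then obtain x where x: "x \<in> S" "x \<in> S'" and "insert m (S - {x}) = insert m (S' - {x})"
    by (auto simp: spoke_traces_def)
  then have "S - {x} = S' - {x}" using assms(1,2) by (metis Diff_iff Diff_insert_absorb)
  with x assms(3) show False by (metis insert_Diff)
qed

lemma distinct_hub_traces:
  assumes "distinct (map hub_pair ds @ [{last_exit e ds, q}])" "distinct (map spoke_pair ds)"
    and "\<forall>d\<in>set ds. m \<notin> spoke_pair d"
  shows "distinct (hub_traces m e q ds)"
  using assms
proof (induction ds arbitrary: e)
  case (Cons d ds)
  obtain u v w where d: "d = (u, v, w)" by (cases d)
  let ?sp = "traces (Some m) (spoke v w) (Some m)" and ?rest = "hub_traces m w q ds"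
  have sp_d: "spoke_pair d = {v, w}" by (simp add: d spoke_pair_def)
  then have vw: "m \<notin> {v, w}" using Cons.prems(3) by simp
  have m_sp: "m \<notin> fst ` set ?sp" using vw spoke_traces_fstD by (force simp: set_traces_spoke)
  have "distinct ?rest" using Cons d by (simp add: hub_pair_def)
  moreover have "(m, {u, v}) \<notin> set ?sp" using m_sp by force
  moreover have "(m, {u, v}) \<notin> set ?rest"
  proof -
    have "{u, v} \<notin> set (map hub_pair ds @ [{last_exit w ds, q}])"
      using Cons.prems(1) d by (simp add: hub_pair_def)
    moreover have "(m, {u, v}) \<notin> spoke_traces m S" if "S \<in> spoke_pair ` set ds" for S
      using Cons.prems(3) that spoke_traces_fstD by fastforce
    ultimately show ?thesis unfolding set_hub_traces set_map by blast
  qed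
  moreover have "set ?sp \<inter> set ?rest = {}"
  proof -
    have "set ?sp \<inter> spoke_traces m S = {}" if S: "S \<in> spoke_pair ` set ds" for S
    proof -
      have "m \<notin> S" using Cons.prems(3) S by auto
      have "spoke_pair d \<notin> spoke_pair ` set ds" using Cons.prems(2) by simp
      then have "{v, w} \<noteq> S" using S sp_d by metis
      with \<open>m \<notin> S\<close> show ?thesis using spoke_traces_disjoint[OF vw] by (simp add: set_traces_spoke)
    qed
    moreover have "set ?sp \<inter> (\<lambda>T. (m, T)) ` A = {}" for A using m_sp by force
    ultimately show ?thesis unfolding set_hub_traces set_map by blast
  qed
  ultimately show ?case using d distinct_traces_spoke by simp
qed simp

lemma hub_traces_involve_hub: "p \<in> set (hub_traces m e q ds) \<Longrightarrow> fst p = m \<or> m \<in> snd p"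
  by (auto simp: set_hub_traces spoke_traces_def)

lemma hub_traces_off_hub:
  assumes "(x, insert m Y) \<in> set (hub_traces m e q ds)" "x \<noteq> m" "m \<notin> Y"
    and "\<forall>d\<in>set ds. m \<notin> spoke_pair d"
  shows "insert x Y \<in> spoke_pair ` set ds"
proof -
  from assms(1,2) obtain d where d: "d \<in> set ds" "(x, insert m Y) \<in> spoke_traces m (spoke_pair d)"
    by (auto simp: set_hub_traces)
  then have "x \<in> spoke_pair d" "insert m (spoke_pair d - {x}) = insert m Y"
    by (auto simp: spoke_traces_def)
  moreover have "m \<notin> spoke_pair d" using assms(4) d(1) by blast
  ultimately have "spoke_pair d - {x} = Y" using assms(3) by (metis Diff_iff Diff_insert_absorb)
  with \<open>x \<in> spoke_pair d\<close> have "spoke_pair d = insert x Y" by (metis insert_Diff)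
  with d(1) show ?thesis by blast
qed

lemma successively_hub_word:
  "\<forall>d\<in>set ds. m \<notin> spoke_pair d \<Longrightarrow> successively (\<noteq>) (hub_word m ds)"
proof (induction ds)
  case Nil
  then show ?case by (simp add: hub_word_def)
next
  case (Cons d ds)
  obtain u v w where d: "d = (u, v, w)" by (cases d)
  obtain ys where "hub_word m ds = m # ys" using hd_hub_word hub_word_not_Nil by (metis list.collapse)
  moreover have "m \<notin> {v, w}" "successively (\<noteq>) (hub_word m ds)"
    using Cons d by (auto simp: spoke_pair_def)
  ultimately show ?case
    unfolding d hub_word_Cons by (auto simp: spoke_def successively_append_iff)
qed

lemma set_spoke [simp]: "set (spoke v w) = {v, w}"
  by (simp add: spoke_def)

lemma set_hub_word: "set (hub_word m ds) = insert m (\<Union>d\<in>set ds. spoke_pair d)"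
  unfolding hub_word_def spoke_pair_def by (fastforce split: prod.splits)

lemma traces_extend:
  assumes "linked 2 ds"
  shows "traces None ([1, 2] @ hub_word m ds @ 1 # 2 # rest) None =
    [(1, {2}), (2, {1, m})] @ hub_traces m 2 1 ds @ (1, {m, 2}) # traces (Some 1) (2 # rest) None"
  using traces_hub_word[OF assms]
  by (simp add: traces_append traces_Cons insert_commute)

definition admissible_schedule :: "nat \<Rightarrow> (nat \<times> nat \<times> nat) list \<Rightarrow> bool" where
  "admissible_schedule M ds \<longleftrightarrow> linked 2 ds \<and> distinct (map hub_pair ds @ [{last_exit 2 ds, 1}]) \<and>
     distinct (map spoke_pair ds) \<and> {1, 2} \<notin> spoke_pair ` set ds \<and> (\<forall>d\<in>set ds. spoke_pair d \<subseteq> {1..M})"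

text \<open>Every new trace involves the new colour \<open>m\<close>, except \<open>(1, {2})\<close>: its old occurrence now
  has trace \<open>(1, {m, 2})\<close>.\<close>
lemma distinct_traces_extend:
  assumes word: "nl_word M (1 # 2 # rest)" and "2 \<le> M" and "admissible_schedule M ds"
  shows "distinct (traces None ([1, 2] @ hub_word (Suc M) ds @ 1 # 2 # rest) None)"
proof -
  have ds: "linked 2 ds" "distinct (map hub_pair ds @ [{last_exit 2 ds, 1}])"
    "distinct (map spoke_pair ds)" "{1, 2} \<notin> spoke_pair ` set ds" "\<forall>d\<in>set ds. spoke_pair d \<subseteq> {1..M}"
    using assms(3) by (simp_all add: admissible_schedule_def)
  let ?m = "Suc M" and ?R = "traces (Some 1) (2 # rest) None" and ?H = "hub_traces (Suc M) 2 1 ds"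
  have m_off: "\<forall>d\<in>set ds. ?m \<notin> spoke_pair d" using ds(5) by fastforce
  have "traces None (1 # 2 # rest) None = (1, {2}) # ?R" by (simp add: traces_Cons)
  with word have "distinct ?R" "(1, {2}) \<notin> set ?R" by (simp_all add: nl_word_def)
  moreover have "fst p \<noteq> ?m \<and> ?m \<notin> snd p" if "p \<in> set ?R" for p
    using traces_memD[OF that] word by (fastforce simp: nl_word_def)
  moreover have "distinct ?H" using distinct_hub_traces[OF ds(2,3) m_off] .
  moreover have "(2, {1, ?m}) \<notin> set ?H" "(1, {?m, 2}) \<notin> set ?H"
    using hub_traces_off_hub[OF _ _ _ m_off, of 2 "{1}"] hub_traces_off_hub[OF _ _ _ m_off, of 1 "{2}"]
      ds(4) \<open>2 \<le> M\<close> by (auto simp: insert_commute)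
  moreover have "(1, {2}) \<notin> set ?H" using hub_traces_involve_hub \<open>2 \<le> M\<close> by fastforce
  moreover note hub_traces_involve_hub[of _ ?m 2 1 ds]
  ultimately show ?thesis unfolding traces_extend[OF ds(1)] using \<open>2 \<le> M\<close> by fastforce
qed

lemma nl_word_extend:
  assumes word: "nl_word M (1 # 2 # rest)" and "2 \<le> M" and ds: "admissible_schedule M ds"
  shows "nl_word (Suc M) ([1, 2] @ hub_word (Suc M) ds @ 1 # 2 # rest)"
proof -
  have m_off: "\<forall>d\<in>set ds. Suc M \<notin> spoke_pair d" and ds_M: "\<forall>d\<in>set ds. spoke_pair d \<subseteq> {1..M}"
    using ds by (fastforce simp: admissible_schedule_def)+
  have "successively (\<noteq>) ([1, 2] @ hub_word (Suc M) ds @ 1 # 2 # rest)"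
  proof -
    have "successively (\<noteq>) (hub_word (Suc M) ds @ 1 # 2 # rest)"
      using word successively_hub_word[OF m_off] by (simp add: nl_word_def successively_append_iff)
    then show ?thesis using \<open>2 \<le> M\<close> by (subst successively_append_iff) (simp add: hd_append)
  qed
  moreover have "set ([1, 2] @ hub_word (Suc M) ds @ 1 # 2 # rest) \<subseteq> {1..Suc M}"
  proof -
    have "set (hub_word (Suc M) ds) \<subseteq> {1..Suc M}" unfolding set_hub_word using ds_M by fastforce
    then show ?thesis using word by (auto simp: nl_word_def)
  qed
  ultimately show ?thesis using distinct_traces_extend[OF assms] by (simp add: nl_word_def)
qed

section \<open>Sweeps through the old colours\<close>

definition far_partners :: "nat \<Rightarrow> nat \<Rightarrow> nat list" where
  "far_partners M x = (if x = 2 then [] else [1]) @ [x + 2..<M + 1]"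

definition partners :: "nat \<Rightarrow> nat \<Rightarrow> nat list" where
  "partners M x = far_partners M x @ (if x < M then [x + 1] else [])"

definition excursions :: "nat \<Rightarrow> nat list \<Rightarrow> (nat \<times> nat \<times> nat) list" where
  "excursions x ys = map (\<lambda>y. (x, y, x)) ys"

text \<open>The pair \<open>{1, 2}\<close> is left out: it is the final hub pair, and as
  a spoke pair it would produce the trace \<open>(2, {1, m})\<close> of the start of the word.\<close>
fun sweep :: "nat \<Rightarrow> nat \<Rightarrow> nat \<Rightarrow> nat \<Rightarrow> (nat \<times> nat \<times> nat) list" where
  "sweep M j 0 x = excursions x (take j (partners M x))"
| "sweep M j (Suc d) x =
     excursions x (far_partners M x) @ [(x, x + 1, x + 1)] @ sweep M j d (x + 1) @ [(x + 1, x + 1, x)]"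

text \<open>Each of the optional excursions \<open>(2, 2, 2)\<close> and \<open>(2, 1, 1)\<close> lengthens the block by two.\<close>
definition schedule :: "nat \<Rightarrow> nat \<Rightarrow> nat \<Rightarrow> nat \<Rightarrow> (nat \<times> nat \<times> nat) list" where
  "schedule M K j b =
     (if 1 \<le> b then [(2, 2, 2)] else []) @ sweep M j (K - 2) 2 @ (if b = 2 then [(2, 1, 1)] else [])"

lemma linked_append: "linked e (xs @ ys) \<longleftrightarrow> linked e xs \<and> linked (last_exit e xs) ys"
  by (induction e xs rule: linked.induct) auto

lemma last_exit_append: "last_exit e (xs @ ys) = last_exit (last_exit e xs) ys"
  by (induction e xs rule: last_exit.induct) auto

lemma linked_excursions: "linked x (excursions x ys) \<and> last_exit x (excursions x ys) = x"
  by (induction ys) (auto simp: excursions_def)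

lemma linked_sweep: "linked x (sweep M j d x) \<and> last_exit x (sweep M j d x) = x"
  by (induction d arbitrary: x) (auto simp: linked_append last_exit_append linked_excursions)

lemma map_hub_pair_excursions: "map hub_pair (excursions x ys) = map (\<lambda>y. {x, y}) ys"
  by (simp add: excursions_def hub_pair_def)

lemma map_spoke_pair_excursions: "map spoke_pair (excursions x ys) = map (\<lambda>y. {x, y}) ys"
  by (simp add: excursions_def spoke_pair_def insert_commute)

lemma distinct_map_doubleton: "distinct ys \<Longrightarrow> x \<notin> set ys \<Longrightarrow> distinct (map (\<lambda>y. {x, y}) ys)"
  by (induction ys) (auto simp: doubleton_eq_iff)

lemma set_far_partners: "set (far_partners M x) = (if x = 2 then {} else {1}) \<union> {x + 2..M}"
  by (auto simp: far_partners_def simp del: upt_Suc)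

lemma set_partners: "set (partners M x) = set (far_partners M x) \<union> (if x < M then {x + 1} else {})"
  unfolding partners_def by (cases "x < M") simp_all

lemma distinct_far_partners: "distinct (far_partners M x)"
  unfolding far_partners_def distinct_append by (simp only: distinct_upt) (auto simp del: upt_Suc)

lemma distinct_partners: "0 < x \<Longrightarrow> distinct (partners M x)"
proof -
  assume "0 < x"
  then have "x + 1 \<notin> set (far_partners M x)" by (simp add: set_far_partners)
  then show ?thesis unfolding partners_def using distinct_far_partners[of M x] by (cases "x < M") auto
qed

text \<open>The invariant of the sweeps: pairs used from \<open>x + 1\<close> neither contain \<open>x\<close> nor equal
  \<open>{x + 1}\<close>, so they are apart from the pairs added by the sweep from \<open>x\<close>.\<close>
definition late_pair :: "nat \<Rightarrow> nat \<Rightarrow> nat set \<Rightarrow> bool" where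
  "late_pair M x E \<longleftrightarrow> E \<subseteq> insert 1 {x..M} \<and> E \<noteq> {} \<and> (\<forall>z. E = {z} \<longrightarrow> x < z)"

lemma sweep_pairs:
  assumes "2 \<le> x" "x + d \<le> M"
  shows "distinct (map hub_pair (sweep M j d x)) \<and> distinct (map spoke_pair (sweep M j d x)) \<and>
    (\<forall>E \<in> set (map hub_pair (sweep M j d x) @ map spoke_pair (sweep M j d x)). late_pair M x E)"
  using assms
proof (induction d arbitrary: x)
  case 0
  let ?ys = "take j (partners M x)"
  have sub: "set ?ys \<subseteq> insert 1 {x + 1..M}"
    using set_take_subset[of j "partners M x"]
    by (auto simp: set_partners set_far_partners split: if_splits)
  moreover from this have "x \<notin> set ?ys" using 0 by auto
  moreover have "distinct ?ys" using distinct_partners[of x M] 0 by simp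
  ultimately show ?case
    using "0.prems" by (auto simp: map_hub_pair_excursions map_spoke_pair_excursions
        distinct_map_doubleton late_pair_def)
next
  case (Suc d)
  let ?ys = "far_partners M x" and ?R = "sweep M j d (x + 1)"
  have IH: "distinct (map hub_pair ?R)" "distinct (map spoke_pair ?R)"
    "\<And>E. E \<in> set (map hub_pair ?R @ map spoke_pair ?R) \<Longrightarrow> late_pair M (x + 1) E"
    using Suc by auto
  have ys: "x \<notin> set ?ys" "x + 1 \<notin> set ?ys" "set ?ys \<subseteq> insert 1 {x + 2..M}" "distinct ?ys"
    using Suc.prems by (auto simp: set_far_partners distinct_far_partners)
  have old: "x \<notin> E" "E \<noteq> {x + 1}" "late_pair M x E"
    if "E \<in> set (map hub_pair ?R @ map spoke_pair ?R)" for E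
    using IH(3)[OF that] Suc.prems by (auto simp: late_pair_def)
  have new: "distinct (map (\<lambda>y. {x, y}) ?ys)" "{x, x + 1} \<notin> (\<lambda>y. {x, y}) ` set ?ys"
    "{x + 1} \<notin> (\<lambda>y. {x, y}) ` set ?ys" "\<forall>y\<in>set ?ys. late_pair M x {x, y}"
    using ys Suc.prems by (auto simp: distinct_map_doubleton doubleton_eq_iff late_pair_def)
  have "map hub_pair (sweep M j (Suc d) x) =
      map (\<lambda>y. {x, y}) ?ys @ [{x, x + 1}] @ map hub_pair ?R @ [{x + 1}]"
    "map spoke_pair (sweep M j (Suc d) x) =
      map (\<lambda>y. {x, y}) ?ys @ [{x + 1}] @ map spoke_pair ?R @ [{x, x + 1}]"
    by (simp_all add: map_hub_pair_excursions map_spoke_pair_excursions)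
      (simp_all add: hub_pair_def spoke_pair_def insert_commute)
  moreover have "late_pair M x {x, x + 1}" "late_pair M x {x + 1}"
    using Suc.prems by (auto simp: late_pair_def)
  ultimately show ?case
    using IH(1,2) old new by auto
qed

lemma sweep_from_2_avoids_12:
  assumes "3 \<le> M" "d \<le> M - 2"
  shows "{1, 2} \<notin> set (map hub_pair (sweep M j d 2) @ map spoke_pair (sweep M j d 2))"
proof (cases d)
  case 0
  have "set (take j (partners M 2)) \<subseteq> {3..M}"
    using set_take_subset[of j "partners M 2"] assms(1)
    by (auto simp: set_partners set_far_partners split: if_splits)
  then show ?thesis
    using 0 by (auto simp: map_hub_pair_excursions map_spoke_pair_excursions doubleton_eq_iff)
next
  case (Suc d')
  have "\<forall>E\<in>set (map hub_pair (sweep M j d' 3) @ map spoke_pair (sweep M j d' 3)). late_pair M 3 E"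
    using sweep_pairs[of 3 d' M j] assms Suc by simp
  moreover have "\<not> late_pair M 3 {1, 2}" by (simp add: late_pair_def)
  ultimately have "{1, 2} \<notin> set (map hub_pair (sweep M j d' 3) @ map spoke_pair (sweep M j d' 3))"
    by blast
  moreover have "set (far_partners M 2) \<subseteq> {4..M}" by (simp add: set_far_partners)
  ultimately show ?thesis
    unfolding Suc sweep.simps map_append map_hub_pair_excursions map_spoke_pair_excursions
    by (auto simp: doubleton_eq_iff hub_pair_def spoke_pair_def numeral_3_eq_3)
qed

lemma schedule_admissible:
  assumes "3 \<le> M" "2 \<le> K" "K \<le> M" "b \<le> 2"
  shows "admissible_schedule M (schedule M K j b)"
proof -
  let ?S = "sweep M j (K - 2) 2"
  let ?P = "set (map hub_pair ?S @ map spoke_pair ?S)"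
  have pairs: "distinct (map hub_pair ?S)" "distinct (map spoke_pair ?S)" "\<forall>E\<in>?P. late_pair M 2 E"
    using sweep_pairs[of 2 "K - 2" M j] assms by auto
  then have "{1} \<notin> ?P" "{2} \<notin> ?P" "\<forall>E\<in>?P. E \<subseteq> {1..M}"
    using assms(1) by (fastforce simp: late_pair_def)+
  moreover have "{1, 2} \<notin> ?P" using sweep_from_2_avoids_12[of M "K - 2" j] assms by simp
  moreover have "linked 2 ?S" "last_exit 2 ?S = 2" using linked_sweep by auto
  moreover from assms(4) consider "b = 0" | "b = 1" | "b = 2" by linarith
  ultimately show ?thesis
    using pairs(1,2) assms(1)
    by cases (auto simp: schedule_def admissible_schedule_def linked_append last_exit_append
        hub_pair_def spoke_pair_def insert_commute)
qed

section \<open>Block lengths\<close>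

definition cost :: "(nat \<times> nat \<times> nat) list \<Rightarrow> nat" where
  "cost ds = (\<Sum>(u, v, w)\<leftarrow>ds. 1 + length (spoke v w))"

lemma cost_append [simp]: "cost (xs @ ys) = cost xs + cost ys"
  by (simp add: cost_def)

lemma cost_Cons [simp]: "cost ((u, v, w) # ds) = 1 + length (spoke v w) + cost ds"
  by (simp add: cost_def)

lemma cost_Nil [simp]: "cost [] = 0"
  by (simp add: cost_def)

lemma length_hub_word: "length (hub_word m ds) = cost ds + 1"
  by (induction ds) (auto simp: hub_word_def cost_def)

lemma cost_excursions: "x \<notin> set ys \<Longrightarrow> cost (excursions x ys) = 3 * length ys"
  by (induction ys) (auto simp: excursions_def spoke_def)

fun sweep_cost :: "nat \<Rightarrow> nat \<Rightarrow> nat \<Rightarrow> nat \<Rightarrow> nat" where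
  "sweep_cost M j 0 x = 3 * min j (length (partners M x))"
| "sweep_cost M j (Suc d) x = 3 * length (far_partners M x) + 5 + sweep_cost M j d (x + 1)"

lemma cost_sweep: "2 \<le> x \<Longrightarrow> cost (sweep M j d x) = sweep_cost M j d x"
proof (induction d arbitrary: x)
  case 0
  have "x \<notin> set (partners M x)" using 0 by (simp add: set_partners set_far_partners)
  then have "x \<notin> set (take j (partners M x))" by (metis in_set_takeD)
  then show ?case by (simp add: cost_excursions)
next
  case (Suc d)
  have "x \<notin> set (far_partners M x)" using Suc.prems by (simp add: set_far_partners)
  then show ?case using Suc by (simp add: cost_excursions spoke_def)
qed

definition block_len :: "nat \<Rightarrow> nat \<Rightarrow> nat \<Rightarrow> nat \<Rightarrow> nat" where
  "block_len M K j b = 1 + 2 * b + sweep_cost M j (K - 2) 2"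

lemma length_hub_word_schedule:
  "b \<le> 2 \<Longrightarrow> length (hub_word m (schedule M K j b)) = block_len M K j b"
  using cost_sweep[of 2 M j "K - 2"]
  by (auto simp: schedule_def length_hub_word block_len_def spoke_def le_Suc_eq numeral_2_eq_2)

lemma length_far_partners: "length (far_partners M x) = (if x = 2 then 0 else 1) + (M + 1 - (x + 2))"
  unfolding far_partners_def length_append by (simp only: length_upt) simp

lemma length_partners: "length (partners M x) = length (far_partners M x) + (if x < M then 1 else 0)"
  unfolding partners_def by (cases "x < M") simp_all

lemma sweep_cost_partial:
  "j \<le> length (partners M (x + d)) \<Longrightarrow> sweep_cost M j d x = sweep_cost M 0 d x + 3 * j"
  by (induction d arbitrary: x) auto

lemma sweep_cost_Suc_0:
  "x + d < M \<Longrightarrow> sweep_cost M 0 (Suc d) x = sweep_cost M (length (partners M (x + d))) d x + 2"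
  by (induction d arbitrary: x) (simp_all add: length_partners)

definition max_block_len :: "nat \<Rightarrow> nat \<Rightarrow> nat" where
  "max_block_len M K = block_len M K (length (partners M K)) 0"

lemma block_len_eq:
  assumes "2 \<le> K" "j \<le> length (partners M K)"
  shows "block_len M K j b = block_len M K 0 0 + 3 * j + 2 * b"
proof -
  have "2 + (K - 2) = K" using assms(1) by simp
  with sweep_cost_partial[of j M 2 "K - 2"] assms(2)
  have "sweep_cost M j (K - 2) 2 = sweep_cost M 0 (K - 2) 2 + 3 * j" by simp
  then show ?thesis by (simp add: block_len_def)
qed

lemma block_len_Suc:
  assumes "2 \<le> K" "K < M"
  shows "block_len M (Suc K) 0 0 = max_block_len M K + 2"
proof -
  have "2 + (K - 2) = K" using assms(1) by simp
  with sweep_cost_Suc_0[of 2 "K - 2" M] assms(2)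
  have "sweep_cost M 0 (Suc (K - 2)) 2 = sweep_cost M (length (partners M K)) (K - 2) 2 + 2" by simp
  moreover have "Suc K - 2 = Suc (K - 2)" using assms(1) by simp
  ultimately show ?thesis by (simp add: max_block_len_def block_len_def)
qed

lemma three_two_representation:
  assumes "(r::nat) \<noteq> 1" "r \<le> 3 * J + 4" "r \<noteq> 3 * J + 3"
  shows "\<exists>j b. j \<le> J \<and> b \<le> 2 \<and> r = 3 * j + 2 * b"
proof -
  consider "r mod 3 = 0" | "r mod 3 = 1" | "r mod 3 = 2" by linarith
  then show ?thesis
  proof cases
    case 1
    then have "r = 3 * (r div 3)" "r div 3 \<le> J" using assms by presburger+
    then show ?thesis by (intro exI[of _ "r div 3"] exI[of _ 0]) simp
  next
    case 2
    then have "r = 3 * (r div 3 - 1) + 2 * 2" "r div 3 - 1 \<le> J" using assms by presburger+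
    then show ?thesis by (intro exI[of _ "r div 3 - 1"] exI[of _ 2]) simp
  next
    case 3
    then have "r = 3 * (r div 3) + 2 * 1" "r div 3 \<le> J" using assms by presburger+
    then show ?thesis by (intro exI[of _ "r div 3"] exI[of _ 1]) simp
  qed
qed

definition block_len_reachable :: "nat \<Rightarrow> nat \<Rightarrow> nat \<Rightarrow> bool" where
  "block_len_reachable M K B \<longleftrightarrow>
     (\<exists>K' j b. 2 \<le> K' \<and> K' \<le> K \<and> j \<le> length (partners M K') \<and> b \<le> 2 \<and> block_len M K' j b = B)"

lemma block_len_reachable_mono:
  "block_len_reachable M K B \<Longrightarrow> K \<le> K' \<Longrightarrow> block_len_reachable M K' B"
  unfolding block_len_reachable_def by (blast intro: le_trans)

lemma block_len_reachable_offset: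
  assumes "2 \<le> K" "r \<noteq> 1" "r \<le> 3 * length (partners M K) + 4" "r \<noteq> 3 * length (partners M K) + 3"
  shows "block_len_reachable M K (block_len M K 0 0 + r)"
proof -
  obtain j b where jb: "j \<le> length (partners M K)" "b \<le> 2" "r = 3 * j + 2 * b"
    using three_two_representation[OF assms(2-4)] by blast
  moreover have "block_len M K j b = block_len M K 0 0 + r"
    using block_len_eq[OF assms(1) jb(1), of b] jb(3) by simp
  ultimately show ?thesis
    using assms(1) unfolding block_len_reachable_def by (intro exI[of _ K] exI[of _ j] exI[of _ b]) simp
qed

lemma max_block_len_eq: "2 \<le> K \<Longrightarrow> max_block_len M K = block_len M K 0 0 + 3 * length (partners M K)"
  using block_len_eq[of K "length (partners M K)" M 0] by (simp add: max_block_len_def)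

lemma length_partners_ge_1: "2 \<le> x \<Longrightarrow> x < M \<or> 3 \<le> x \<Longrightarrow> 1 \<le> length (partners M x)"
  by (auto simp: length_partners length_far_partners)

text \<open>For fixed \<open>K\<close> the block lengths \<open>block_len M K 0 0 + 3 j + 2 b\<close> fill an interval with two
  holes, and consecutive levels \<open>K\<close> leave a gap of one.\<close>
lemma block_lens_cover:
  assumes "3 \<le> M" "2 \<le> K" "K \<le> M"
    and "t \<le> max_block_len M K + 5" "t \<noteq> 1" "t \<noteq> max_block_len M K + 4"
  shows "block_len_reachable M K (t + 1) \<or> (1 \<le> t \<and> block_len_reachable M K (t - 1))"
  using assms(2-6)
proof (induction K arbitrary: t rule: dec_induct)
  case base
  let ?J = "length (partners M 2)"
  have J: "1 \<le> ?J" using assms(1) length_partners_ge_1[of 2 M] by simp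
  have B0: "block_len M 2 0 0 = 1" by (simp add: block_len_def)
  have top: "max_block_len M 2 = 1 + 3 * ?J" using max_block_len_eq[of 2 M] B0 by simp
  show ?case
  proof (cases "t = 0 \<or> t = 3")
    case True
    then have "block_len_reachable M 2 (block_len M 2 0 0 + t)"
      using J by (intro block_len_reachable_offset) auto
    then show ?thesis using B0 by simp
  next
    case False
    then have "block_len_reachable M 2 (block_len M 2 0 0 + (t - 2))"
      using base.prems top by (intro block_len_reachable_offset) auto
    moreover have "block_len M 2 0 0 + (t - 2) = t - 1" "1 \<le> t" using B0 False base.prems(3) by auto
    ultimately show ?thesis by simp
  qed
next
  case (step k)
  let ?J = "length (partners M (Suc k))" and ?top = "max_block_len M k"
  have k: "2 \<le> k" "k < M" using step.hyps step.prems(1) by auto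
  have J: "1 \<le> ?J" using k length_partners_ge_1[of "Suc k" M] by simp
  have B0: "block_len M (Suc k) 0 0 = ?top + 2" using block_len_Suc k by simp
  have top: "max_block_len M (Suc k) = ?top + 2 + 3 * ?J"
    using max_block_len_eq[of "Suc k" M] B0 k by simp
  consider "t \<le> ?top + 5" "t \<noteq> ?top + 4" | "t = ?top + 4" | "?top + 6 \<le> t" by linarith
  then show ?case
  proof cases
    case 1
    then show ?thesis
      using step.IH[of t] k step.prems(3) block_len_reachable_mono[of M k _ "Suc k"] by auto
  next
    case 2
    have "block_len_reachable M (Suc k) (block_len M (Suc k) 0 0 + 3)"
      using J k by (intro block_len_reachable_offset) auto
    then show ?thesis using B0 2 by simp
  next
    case 3
    have "block_len_reachable M (Suc k) (block_len M (Suc k) 0 0 + (t - ?top - 3))"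
      using 3 step.prems top k by (intro block_len_reachable_offset) auto
    moreover have "block_len M (Suc k) 0 0 + (t - ?top - 3) = t - 1" using B0 3 by linarith
    ultimately show ?thesis using 3 by (simp only:) simp
  qed
qed

section \<open>Growth of the capacity\<close>

definition full_block_len :: "nat \<Rightarrow> nat" where
  "full_block_len M = block_len M M (length (partners M M)) 2"

lemma length_partners_top: "3 \<le> M \<Longrightarrow> length (partners M M) = 1"
  by (simp add: length_partners length_far_partners)

lemma full_block_len_eq: "3 \<le> M \<Longrightarrow> full_block_len M = max_block_len M M + 4"
  using block_len_eq[of M "length (partners M M)" M 2] block_len_eq[of M "length (partners M M)" M 0]
  by (simp add: full_block_len_def max_block_len_def)

lemma sweep_cost_closed:
  "3 \<le> x \<Longrightarrow> x + t = M \<Longrightarrow> 2 * sweep_cost M 1 t x = 3 * t * (t + 1) + 10 * t + 6"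
proof (induction t arbitrary: x)
  case 0
  then show ?case using length_partners_ge_1[of M M] by simp
next
  case (Suc t)
  then have "2 * sweep_cost M 1 t (x + 1) = 3 * t * (t + 1) + 10 * t + 6"
    "length (far_partners M x) = 1 + t" by (simp_all add: length_far_partners)
  then show ?case by (simp add: algebra_simps)
qed

lemma full_block_len_closed: "3 \<le> M \<Longrightarrow> 2 * full_block_len M + 4 = M * (3 * M + 1)"
proof -
  assume M: "3 \<le> M"
  define s where "s = M - 3"
  have M_s: "M = s + 3" "M - 2 = Suc s" using M by (simp_all add: s_def)
  have "2 * full_block_len M + 4 = 14 + 2 * sweep_cost M 1 (M - 2) 2"
    using length_partners_top[OF M] by (simp add: full_block_len_def block_len_def)
  also have "\<dots> = 24 + 6 * s + 2 * sweep_cost M 1 s 3"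
    using M_s by (simp add: length_far_partners)
  also have "\<dots> = M * (3 * M + 1)"
    using sweep_cost_closed[of 3 s M] M_s by (simp add: algebra_simps)
  finally show ?thesis .
qed

lemma path_capacity_Suc: "3 \<le> M \<Longrightarrow> path_capacity (Suc M) = path_capacity M + full_block_len M + 2"
proof -
  assume M: "3 \<le> M"
  have "2 * path_capacity (Suc M) = Suc M * Suc M * M"
    using two_path_capacity[of "Suc M"] cube_minus_square[of "Suc M"] by simp
  also have "\<dots> = M * M * (M - 1) + M * (3 * M + 1)"
    using M by (cases M) (simp_all add: algebra_simps)
  also have "\<dots> = 2 * path_capacity M + (2 * full_block_len M + 4)"
    using two_path_capacity[of M] cube_minus_square[of M] full_block_len_closed[OF M] by simp
  finally show ?thesis by simp
qed

lemma full_block_len_ge: "3 \<le> M \<Longrightarrow> 13 \<le> full_block_len M"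
proof -
  assume M: "3 \<le> M"
  then have "3 * 10 \<le> M * (3 * M + 1)" by (intro mult_le_mono) auto
  then show ?thesis using full_block_len_closed[OF M] by simp
qed

lemma path_capacity_ge: "3 \<le> M \<Longrightarrow> 9 \<le> path_capacity M"
proof (induction M rule: dec_induct)
  case base
  then show ?case by (simp add: path_capacity_small)
next
  case (step M)
  then show ?case using path_capacity_Suc[of M] by simp
qed

section \<open>Building the words level by level\<close>

definition ends_with_12 :: "nat list \<Rightarrow> bool" where
  "ends_with_12 G \<longleftrightarrow> drop (length G - 2) G = [1, 2]"

lemma nl_word_prepend_block:
  assumes "3 \<le> M" "2 \<le> K" "K \<le> M" "b \<le> 2" "nl_word M G" "take 2 G = [1, 2]"
  shows "\<exists>G'. length G' = 2 + block_len M K j b + length G \<and> nl_word (Suc M) G' \<and>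
    take 3 G' = [1, 2, Suc M] \<and> (ends_with_12 G \<longrightarrow> ends_with_12 G')"
proof -
  obtain rest where G: "G = 1 # 2 # rest"
    using assms(6) by (metis append_take_drop_id append_Cons append_Nil)
  let ?G' = "[1, 2] @ hub_word (Suc M) (schedule M K j b) @ G"
  have "nl_word (Suc M) ?G'"
    using nl_word_extend schedule_admissible[OF assms(1-4)] assms(1,5) G by simp
  moreover have "length ?G' = 2 + block_len M K j b + length G"
    using length_hub_word_schedule[OF assms(4)] by simp
  moreover have "take 3 ?G' = [1, 2, Suc M]"
  proof -
    obtain ys where "hub_word (Suc M) (schedule M K j b) = Suc M # ys"
      using hd_hub_word hub_word_not_Nil by (metis list.collapse)
    then show ?thesis by simp
  qed
  moreover have "ends_with_12 G \<longrightarrow> ends_with_12 ?G'"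
    unfolding ends_with_12_def G by simp
  ultimately show ?thesis by blast
qed

text \<open>Words of these four lengths for \<open>M\<close> colours suffice to reach every length for \<open>M + 1\<close>
  colours.\<close>
definition seed_words :: "nat \<Rightarrow> bool" where
  "seed_words M \<longleftrightarrow>
     (\<forall>k \<in> {path_capacity M, path_capacity M - 1, path_capacity M - 2, path_capacity M - 4}.
       \<exists>G. length G = k \<and> nl_word M G \<and> take 2 G = [1, 2] \<and>
         (k \<noteq> path_capacity M - 1 \<longrightarrow> ends_with_12 G))"

lemma seed_words_3: "seed_words 3"
proof -
  have "\<exists>G. length G = 9 \<and> nl_word 3 G \<and> take 2 G = [1, 2] \<and> ends_with_12 G"
    by (rule exI[of _ "[1,2,3,2,3,1,3,1,2]"]) (simp add: nl_word_def ends_with_12_def)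
  moreover have "\<exists>G. length G = 8 \<and> nl_word 3 G \<and> take 2 G = [1, 2]"
    by (rule exI[of _ "[1,2,1,3,1,3,2,3]"]) (simp add: nl_word_def)
  moreover have "\<exists>G. length G = 7 \<and> nl_word 3 G \<and> take 2 G = [1, 2] \<and> ends_with_12 G"
    by (rule exI[of _ "[1,2,3,1,3,1,2]"]) (simp add: nl_word_def ends_with_12_def)
  moreover have "\<exists>G. length G = 5 \<and> nl_word 3 G \<and> take 2 G = [1, 2] \<and> ends_with_12 G"
    by (rule exI[of _ "[1,2,3,1,2]"]) (simp add: nl_word_def ends_with_12_def)
  ultimately show ?thesis unfolding seed_words_def path_capacity_small by auto
qed

lemma seed_extension:
  assumes "3 \<le> M" "seed_words M" "block_len_reachable M M B"
    and "k \<in> {path_capacity M, path_capacity M - 1, path_capacity M - 2, path_capacity M - 4}"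
  shows "\<exists>G. length G = 2 + B + k \<and> nl_word (Suc M) G \<and> take 3 G = [1, 2, Suc M] \<and>
    (k \<noteq> path_capacity M - 1 \<longrightarrow> ends_with_12 G)"
proof -
  obtain G where G: "length G = k" "nl_word M G" "take 2 G = [1, 2]"
    "k \<noteq> path_capacity M - 1 \<longrightarrow> ends_with_12 G"
    using assms(2,4) unfolding seed_words_def by blast
  obtain K j b where "2 \<le> K" "K \<le> M" "b \<le> 2" "block_len M K j b = B"
    using assms(3) unfolding block_len_reachable_def by blast
  with nl_word_prepend_block[OF assms(1) _ _ _ G(2,3)] G(1,4) show ?thesis by blast
qed

lemma nl_word_next_level:
  assumes M: "3 \<le> M" and seeds: "seed_words M"
    and n: "path_capacity M < n" "n \<le> path_capacity (Suc M)"
  shows "\<exists>G. length G = n \<and> nl_word (Suc M) G \<and> take 3 G = [1, 2, Suc M] \<and>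
    (n \<noteq> path_capacity (Suc M) - 1 \<longrightarrow> ends_with_12 G)"
proof -
  let ?N = "path_capacity M" and ?F = "full_block_len M"
  define t where "t = n - ?N - 1"
  have N9: "9 \<le> ?N" using path_capacity_ge[OF M] .
  have cap: "path_capacity (Suc M) = ?N + ?F + 2" using path_capacity_Suc[OF M] .
  have t: "n = ?N + 1 + t" "t \<le> ?F + 1" using n cap unfolding t_def by auto
  have extend: ?thesis
    if B: "block_len_reachable M M B" and k: "k \<in> {?N, ?N - 2, ?N - 4}" and len: "n = 2 + B + k" for B k
  proof -
    obtain G where "length G = 2 + B + k" "nl_word (Suc M) G" "take 3 G = [1, 2, Suc M]" "ends_with_12 G"
      using seed_extension[OF M seeds B, of k] k N9 by auto
    then show ?thesis using len by auto
  qed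
  consider "t = 1" | "t = ?F" | "t \<noteq> 1" "t \<noteq> ?F" by blast
  then show ?thesis
  proof cases
    case 1
    have "block_len M 2 1 0 = 4"
      using length_partners_ge_1[of 2 M] M by (simp add: block_len_def)
    then have "block_len_reachable M M 4"
      using M length_partners_ge_1[of 2 M] unfolding block_len_reachable_def by fastforce
    then show ?thesis using t 1 N9 by (intro extend[of 4 "?N - 4"]) auto
  next
    case 2
    have "block_len_reachable M M ?F"
      using M unfolding block_len_reachable_def full_block_len_def
      by (intro exI[of _ M] exI[of _ "length (partners M M)"] exI[of _ 2]) simp
    then obtain G where "length G = 2 + ?F + (?N - 1)" "nl_word (Suc M) G" "take 3 G = [1, 2, Suc M]"
      using seed_extension[OF M seeds, of ?F "?N - 1"] by auto
    then show ?thesis using t 2 N9 cap by (intro exI[of _ G]) auto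
  next
    case 3
    then have "block_len_reachable M M (t + 1) \<or> (1 \<le> t \<and> block_len_reachable M M (t - 1))"
      using block_lens_cover[OF M _ order.refl, of t] t(2) full_block_len_eq[OF M] M by auto
    then show ?thesis
    proof
      assume "block_len_reachable M M (t + 1)"
      then show ?thesis using t N9 by (intro extend[of "t + 1" "?N - 2"]) auto
    next
      assume "1 \<le> t \<and> block_len_reachable M M (t - 1)"
      then show ?thesis using t N9 by (intro extend[of "t - 1" ?N]) auto
    qed
  qed
qed

lemma seed_words_ge_3: "3 \<le> M \<Longrightarrow> seed_words M"
proof (induction M rule: dec_induct)
  case base
  then show ?case by (rule seed_words_3)
next
  case (step M)
  let ?N' = "path_capacity (Suc M)"
  have prefix: "take 2 G = [1, 2]" if "take 3 G = [1, 2, c]" for G :: "nat list" and c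
  proof -
    have "take 2 G = take 2 (take 3 G)" by simp
    with that show ?thesis by simp
  qed
  show ?case unfolding seed_words_def
  proof
    fix k assume "k \<in> {?N', ?N' - 1, ?N' - 2, ?N' - 4}"
    then have "path_capacity M < k" "k \<le> ?N'"
      using path_capacity_Suc[OF step.hyps(1)] full_block_len_ge[OF step.hyps(1)] by auto
    with nl_word_next_level[OF step.hyps(1) step.IH] prefix
    show "\<exists>G. length G = k \<and> nl_word (Suc M) G \<and> take 2 G = [1, 2] \<and> (k \<noteq> ?N' - 1 \<longrightarrow> ends_with_12 G)"
      by blast
  qed
qed

section \<open>Chromatic number of the path\<close>

lemma nl_word_exists:
  assumes n: "2 \<le> n" "n \<le> path_capacity m" and least: "\<forall>k<m. path_capacity k < n"
  shows "\<exists>G. length G = n \<and> nl_word m G \<and> G ! 0 = 1 \<and> G ! 1 = 2 \<and> (9 \<le> n \<longrightarrow> G ! 2 = m) \<and>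
    (9 \<le> n \<and> n \<noteq> path_capacity m - 1 \<longrightarrow> ends_with_12 G)"
proof -
  have "2 \<le> m"
  proof (rule ccontr)
    assume "\<not> 2 \<le> m"
    then have "m = 0 \<or> m = 1" by auto
    then show False using n path_capacity_small by auto
  qed
  then consider "m = 2" | "m = 3" | "4 \<le> m" by linarith
  then show ?thesis
  proof cases
    case 1
    then have "n = 2" using n path_capacity_small by simp
    then show ?thesis using 1 by (intro exI[of _ "[1, 2]"]) (simp add: nl_word_def)
  next
    case 2
    define W :: "nat list set" where "W = {[1,2,3], [1,2,3,1], [1,2,3,1,2], [1,2,3,2,3,1],
      [1,2,3,1,3,1,2], [1,2,1,3,1,3,2,3], [1,2,3,2,3,1,3,1,2]}"
    have "3 \<le> n" "n \<le> 9" using n least[rule_format, of 2] 2 path_capacity_small by auto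
    then have "\<exists>G\<in>W. length G = n" unfolding W_def by simp presburger
    moreover have "\<forall>G\<in>W. nl_word 3 G \<and> G ! 0 = 1 \<and> G ! 1 = 2 \<and>
        (9 \<le> length G \<longrightarrow> G ! 2 = 3 \<and> ends_with_12 G)"
      by (simp add: W_def nl_word_def ends_with_12_def)
    ultimately show ?thesis using 2 by auto
  next
    case 3
    define M where "M = m - 1"
    have M: "3 \<le> M" "m = Suc M" using 3 by (simp_all add: M_def)
    then have "path_capacity M < n" using least by simp
    with nl_word_next_level[OF M(1) seed_words_ge_3[OF M(1)]] n M obtain G where
      G: "length G = n" "nl_word m G" "take 3 G = [1, 2, m]" "n \<noteq> path_capacity m - 1 \<longrightarrow> ends_with_12 G"
      by auto
    have "G ! i = [1, 2, m] ! i" if "i < 3" for i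
      using nth_take[OF that, of G] G(3) by simp
    then have "G ! 0 = 1" "G ! 1 = 2" "G ! 2 = m" by (simp_all add: numeral_eq_Suc)
    with G show ?thesis by blast
  qed
qed

lemma ends_with_12_nth:
  assumes "ends_with_12 G" "2 \<le> length G"
  shows "G ! (length G - 2) = 1" "G ! (length G - 1) = 2"
proof -
  have "drop (length G - 2) G = [1, 2]" using assms(1) by (simp add: ends_with_12_def)
  then have "G ! (length G - 2 + i) = [1, 2] ! i" for i by (metis diff_le_self nth_drop)
  from this[of 0] this[of 1] assms(2) show "G ! (length G - 2) = 1" "G ! (length G - 1) = 2"
    by (simp_all add: Suc_diff_Suc numeral_2_eq_2)
qed

lemma nl_word_neighbor_locating:
  assumes "nl_word m G" "2 \<le> length G" and minimal: "\<And>k. length G \<le> path_capacity k \<Longrightarrow> m \<le> k"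
  shows "neighbor_locating_coloring (path_V (length G)) path_E m (path_coloring G)"
proof -
  have loc: "locating_coloring (path_V (length G)) path_E (path_coloring G)"
    using nl_word_locating_coloring[OF assms(1)] .
  have sub: "set G \<subseteq> {1..m}" using assms(1) by (simp add: nl_word_def)
  have "m \<le> card (set G)"
    using minimal path_locating_coloring_card_le[OF assms(2) _ _ loc] path_coloring_image[of G]
    by (simp add: path_capacity_le_iff)
  with sub have "set G = {1..m}" by (intro card_seteq) auto
  with loc show ?thesis by (simp add: neighbor_locating_coloring_iff path_coloring_image)
qed

lemma chi_L2_path_eq:
  assumes "2 \<le> n" "neighbor_locating_coloring (path_V n) path_E m f"
    and "\<And>k. n \<le> path_capacity k \<Longrightarrow> m \<le> k"
  shows "chi_L2 (path_V n) path_E = m"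
  unfolding chi_L2_def using assms path_nl_coloring_bound[OF assms(1)] by (intro Least_equality) auto

theorem theorem2:
  fixes n m :: nat
  assumes "n \<ge> 2"
    and "m = (LEAST k::nat. 2 * n \<le> k ^ 3 - k ^ 2)"
  shows "chi_L2 (path_V n) path_E = m \<and>
    (\<exists>f. neighbor_locating_coloring (path_V n) path_E m f \<and>
         f (n - 1) = 2 \<and> f n = 1 \<and>
         (n \<ge> 9 \<longrightarrow> f (n - 2) = m) \<and>
         (n \<ge> 9 \<and> 2 * n \<noteq> m ^ 3 - m ^ 2 - 2 \<longrightarrow> f 1 = 2 \<and> f 2 = 1))"
proof -
  have m: "m = (LEAST k. n \<le> path_capacity k)" using assms(2) by (simp add: path_capacity_le_iff)
  have minimal: "m \<le> k" if "n \<le> path_capacity k" for k using that unfolding m by (rule Least_le)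
  have "n \<le> path_capacity m"
    unfolding m by (rule LeastI[of "\<lambda>k. n \<le> path_capacity k", OF path_capacity_ge_self[OF assms(1)]])
  moreover have "\<forall>k<m. path_capacity k < n" using minimal by (meson not_le)
  ultimately obtain G where G: "length G = n" "nl_word m G" "G ! 0 = 1" "G ! 1 = 2"
    "9 \<le> n \<longrightarrow> G ! 2 = m" "9 \<le> n \<and> n \<noteq> path_capacity m - 1 \<longrightarrow> ends_with_12 G"
    using nl_word_exists[OF assms(1)] by blast
  let ?f = "path_coloring G"
  have nlc: "neighbor_locating_coloring (path_V n) path_E m ?f"
    using nl_word_neighbor_locating[OF G(2)] G(1) assms(1) minimal by simp
  moreover have "n \<ge> 9 \<and> 2 * n \<noteq> m ^ 3 - m ^ 2 - 2 \<longrightarrow> ?f 1 = 2 \<and> ?f 2 = 1"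
    using G ends_with_12_nth[of G] assms(1) two_path_capacity[of m] by (auto simp: path_coloring_def)
  ultimately show ?thesis
    using chi_L2_path_eq[OF assms(1) nlc minimal] G assms(1)
    by (intro conjI exI[of _ ?f]) (auto simp: path_coloring_def)
qed

end
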